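(* Let $U$ be as in the context and let $\mathcal{N}_U(\mathbb{N}_1)=\{x\in\mathbb{R}_1: U^k(x)\notin\mathbb{N}_1 \text{ for all } k\in\mathbb{N}_0\}$. Suppose that for every $n\in\mathbb{N}_1$ and every real $\rho>0$ there exists $z\in(n,n+\rho)\cap\mathcal{N}_U(\mathbb{N}_1)$ such that $\mathcal{T}_U(z)\to\{1,2\}$. Then the only $U$-cycle is $(1,2,1,2,\dots)$; that is, if $x\in\mathbb{R}_1$ and $U^k(x)=x$ for some $k\ge1$, then $x\in\{1,2\}$.
   Context: $\mathbb{R}_1=\{x\ge1\}$, $\mathbb{N}_0=\{0,1,2,\dots\}$, $\mathbb{N}_1=\{1,2,\dots\}$. $U:\mathbb{R}_1\to\mathbb{R}_1$: $U(x)=x/2$ if $\lfloor x\rfloor$ is even, $U(x)=(3x+1)/2$ if $\lfloor x\rfloor$ is odd; $U^i$ is the $i$-th iterate and $\mathcal T_U(x)=(U^i(x))_{i\ge0}$. The notation $\mathcal T_U(x)\to\{1,2\}$ means $\{\lim_{k\to\infty}U^{2k}(x),\lim_{k\to\infty}U^{2k+1}(x)\}=\{1,2\}$ (both limits existing). A $U$-cycle is the trajectory of a point $z$ with $U^n(z)=z$ for some $n\ge1$. *)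

theory Defs
  imports "HOL-Analysis.Analysis"
begin

definition U :: "real \<Rightarrow> real" where
  "U x = (if even \<lfloor>x\<rfloor> then x / 2 else (3 * x + 1) / 2)"

definition N1 :: "real set" where
  "N1 = {real n | n. n \<ge> 1}"

definition NU_N1 :: "real set" where
  "NU_N1 = {x. x \<ge> 1 \<and> (\<forall>k::nat. (U ^^ k) x \<notin> N1)}"

definition traj_to_12 :: "real \<Rightarrow> bool" where
  "traj_to_12 x = (\<exists>a b. (\<lambda>k. (U ^^ (2 * k)) x) \<longlonglongrightarrow> a \<and>
                         (\<lambda>k. (U ^^ (2 * k + 1)) x) \<longlonglongrightarrow> b \<and> {a, b} = {1, 2})"

end

theory Submission
  imports Defs
begin

(* Call the points y whose first k iterates have the same integer parts as those of x the
   k-branch of x. On it U^k is affine, y \<mapsto> c y + d, with d > 0 as soon as one odd step occurs;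
   hence a U-cycle x of period k, which is a fixed point of this map, has c < 1 and attracts a
   half-open interval around x. Taking that interval maximal, its left end is mapped by some U^j,
   j < k, to an integer n, so all points slightly to the right of n are attracted to U^j x along
   the multiples of k. By hypothesis one of them has even iterates converging to 1 or 2, so
   U^j x \<in> {1, 2}, and x lies on the cycle through U^j x. *)

lemma U_ge_1: "y \<ge> 1 \<Longrightarrow> U y \<ge> 1"
  unfolding U_def by (cases "\<lfloor>y\<rfloor> = 1") (auto, linarith)

lemma funpow_U_ge_1: "y \<ge> 1 \<Longrightarrow> (U ^^ i) y \<ge> 1"
  by (induction i) (auto intro: U_ge_1)

lemma funpow_U_12: "w \<in> {1, 2} \<Longrightarrow> (U ^^ i) w \<in> {1, 2}"
  by (induction i) (auto simp: U_def)

fun branch_slope :: "real \<Rightarrow> nat \<Rightarrow> real" where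
  "branch_slope x 0 = 1"
| "branch_slope x (Suc i) = (if even \<lfloor>(U ^^ i) x\<rfloor> then 1 / 2 else 3 / 2) * branch_slope x i"

fun branch_offset :: "real \<Rightarrow> nat \<Rightarrow> real" where
  "branch_offset x 0 = 0"
| "branch_offset x (Suc i) =
     (if even \<lfloor>(U ^^ i) x\<rfloor> then branch_offset x i / 2 else (3 * branch_offset x i + 1) / 2)"

definition same_branch :: "nat \<Rightarrow> real \<Rightarrow> real \<Rightarrow> bool" where
  "same_branch k y x \<longleftrightarrow> (\<forall>i<k. \<lfloor>(U ^^ i) y\<rfloor> = \<lfloor>(U ^^ i) x\<rfloor>)"

lemma same_branch_Suc:
  "same_branch (Suc i) y x \<longleftrightarrow> same_branch i y x \<and> \<lfloor>(U ^^ i) y\<rfloor> = \<lfloor>(U ^^ i) x\<rfloor>"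
  unfolding same_branch_def using less_Suc_eq by auto

lemma same_branch_le: "same_branch k y x \<Longrightarrow> i \<le> k \<Longrightarrow> same_branch i y x"
  unfolding same_branch_def by auto

lemma branch_slope_pos: "branch_slope x i > 0"
  by (induction i) auto

lemma branch_offset_nonneg: "branch_offset x i \<ge> 0"
  by (induction i) auto

lemma branch_slope_lt_1_or_offset_pos:
  "i \<ge> 1 \<Longrightarrow> branch_slope x i < 1 \<or> branch_offset x i > 0"
proof (induction i)
  case (Suc i)
  then show ?case
    using branch_slope_pos[of x i] branch_offset_nonneg[of x i] by (cases "i = 0") auto
qed simp

lemma funpow_U_branch_affine:
  "same_branch i y x \<Longrightarrow> (U ^^ i) y = branch_slope x i * y + branch_offset x i"
proof (induction i)
  case (Suc i)
  define a where "a = branch_slope x i * y + branch_offset x i"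
  from Suc have "(U ^^ i) y = a" and "\<lfloor>a\<rfloor> = \<lfloor>(U ^^ i) x\<rfloor>"
    by (simp_all add: same_branch_Suc a_def)
  then have "(U ^^ Suc i) y = (if even \<lfloor>(U ^^ i) x\<rfloor> then a / 2 else (3 * a + 1) / 2)"
    by (simp add: U_def)
  then show ?case by (simp add: a_def field_simps)
qed simp

lemma funpow_U_branch_diff:
  "same_branch i y x \<Longrightarrow> (U ^^ i) y = (U ^^ i) x + branch_slope x i * (y - x)"
  using funpow_U_branch_affine[of i y x] funpow_U_branch_affine[of i x x]
  by (simp add: same_branch_def algebra_simps)

lemma same_branch_if_floor_eq:
  assumes "\<And>i. i < k \<Longrightarrow> \<lfloor>(U ^^ i) x + branch_slope x i * (y - x)\<rfloor> = \<lfloor>(U ^^ i) x\<rfloor>"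
  shows "same_branch k y x"
  using assms
proof (induction k)
  case (Suc k)
  then have "same_branch k y x" by simp
  with Suc.prems show ?case by (simp add: same_branch_Suc funpow_U_branch_diff)
qed (simp add: same_branch_def)

lemma periodic_branch_slope_lt_1:
  assumes "x > 0" "k \<ge> 1" "(U ^^ k) x = x"
  shows "branch_slope x k < 1"
proof (rule ccontr)
  assume ge: "\<not> branch_slope x k < 1"
  then have "branch_slope x k * x \<ge> x" using \<open>x > 0\<close> by simp
  moreover have "x = branch_slope x k * x + branch_offset x k"
    using funpow_U_branch_affine[of k x x] assms(3) by (simp add: same_branch_def)
  ultimately show False
    using branch_slope_lt_1_or_offset_pos[of k x] \<open>k \<ge> 1\<close> ge by linarith
qed

(* The left end x - \<delta> is mapped by U^j to the integer \<lfloor>U^j x\<rfloor>. *)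
lemma branch_interval:
  assumes "k \<ge> 1"
  obtains j \<delta> \<epsilon> where "j < k" "\<delta> \<ge> 0" "\<epsilon> > 0"
    "frac ((U ^^ j) x) = branch_slope x j * \<delta>"
    "\<And>y. x - \<delta> \<le> y \<Longrightarrow> y < x + \<epsilon> \<Longrightarrow> same_branch k y x"
proof -
  define s where "s = branch_slope x"
  define left where "left i = frac ((U ^^ i) x) / s i" for i
  define right where "right i = (1 - frac ((U ^^ i) x)) / s i" for i
  have s_pos: "s i > 0" for i unfolding s_def by (rule branch_slope_pos)
  have ne: "{..<k} \<noteq> {}" using assms by (auto simp: lessThan_empty_iff)
  obtain j where j: "j < k" "left j = Min (left ` {..<k})"
    using Min_in[of "left ` {..<k}"] ne by fastforce
  define \<epsilon> where "\<epsilon> = Min (right ` {..<k})"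
  obtain i where "\<epsilon> = right i"
    using Min_in[of "right ` {..<k}"] ne unfolding \<epsilon>_def by fastforce
  then have "\<epsilon> > 0" using s_pos[of i] frac_lt_1[of "(U ^^ i) x"] by (simp add: right_def)
  moreover have "same_branch k y x" if y: "x - left j \<le> y" "y < x + \<epsilon>" for y
  proof (rule same_branch_if_floor_eq)
    fix i assume "i < k"
    then have "left j \<le> left i" "\<epsilon> \<le> right i"
      unfolding j(2) \<epsilon>_def by simp_all
    then have "x - y \<le> left i" "y - x < right i"
      using y by linarith+
    then have "- frac ((U ^^ i) x) \<le> s i * (y - x)" "s i * (y - x) < 1 - frac ((U ^^ i) x)"
      using s_pos[of i] by (auto simp: left_def right_def field_simps)
    then show "\<lfloor>(U ^^ i) x + branch_slope x i * (y - x)\<rfloor> = \<lfloor>(U ^^ i) x\<rfloor>"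
      by (simp add: floor_eq_iff frac_def s_def)
  qed
  moreover have "frac ((U ^^ j) x) = s j * left j" using s_pos[of j] by (simp add: left_def)
  ultimately show thesis
    using that[of j "left j" \<epsilon>] j(1) s_pos[of j] unfolding s_def left_def by auto
qed

lemma convex_real_towards_mem:
  fixes x y t :: real
  assumes "convex I" "x \<in> I" "y \<in> I" "0 \<le> t" "t \<le> 1"
  shows "x + t * (y - x) \<in> I"
  using convexD_alt[OF assms] by (simp add: algebra_simps)

lemma funpow_period_on_branch:
  assumes "convex I" "x \<in> I" "y \<in> I" and branch: "\<And>v. v \<in> I \<Longrightarrow> same_branch k v x"
    and cycle: "(U ^^ k) x = x" and slope: "branch_slope x k < 1"
  shows "(U ^^ (m * k)) y = x + branch_slope x k ^ m * (y - x)"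
proof (induction m)
  case (Suc m)
  define c where "c = branch_slope x k"
  define v where "v = x + c ^ m * (y - x)"
  have "0 \<le> c ^ m" "c ^ m \<le> 1"
    using branch_slope_pos[of x k] slope unfolding c_def by (simp_all add: power_le_one)
  then have "v \<in> I"
    unfolding v_def using convex_real_towards_mem \<open>convex I\<close> \<open>x \<in> I\<close> \<open>y \<in> I\<close> by blast
  have "(U ^^ (Suc m * k)) y = (U ^^ k) v"
    using Suc by (simp add: funpow_add v_def c_def)
  also have "\<dots> = x + c * (v - x)"
    using funpow_U_branch_diff[OF branch[OF \<open>v \<in> I\<close>]] cycle by (simp add: c_def)
  finally show ?case by (simp add: v_def c_def)
qed simp

lemma funpow_period_on_branch_tendsto:
  assumes "convex I" "x \<in> I" "y \<in> I" and branch: "\<And>v. v \<in> I \<Longrightarrow> same_branch k v x"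
    and cycle: "(U ^^ k) x = x" and slope: "branch_slope x k < 1" and "i \<le> k"
  shows "(\<lambda>m. (U ^^ i) ((U ^^ (m * k)) y)) \<longlonglongrightarrow> (U ^^ i) x"
proof -
  define c where "c = branch_slope x k"
  have c: "0 < c" "c < 1" using branch_slope_pos slope unfolding c_def by auto
  have "(U ^^ i) ((U ^^ (m * k)) y) = (U ^^ i) x + branch_slope x i * (y - x) * c ^ m" for m
  proof -
    have "x + c ^ m * (y - x) \<in> I"
      using convex_real_towards_mem[of I x y "c ^ m"] assms(1-3) c by (simp add: power_le_one)
    from same_branch_le[OF branch[OF this] \<open>i \<le> k\<close>]
    have "(U ^^ i) (x + c ^ m * (y - x)) = (U ^^ i) x + branch_slope x i * (c ^ m * (y - x))"
      by (simp add: funpow_U_branch_diff)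
    moreover have "(U ^^ (m * k)) y = x + c ^ m * (y - x)"
      using funpow_period_on_branch[OF assms(1-3) branch cycle slope] by (simp add: c_def)
    ultimately show ?thesis by simp
  qed
  moreover have "(\<lambda>m. (U ^^ i) x + branch_slope x i * (y - x) * c ^ m) \<longlonglongrightarrow>
      (U ^^ i) x + branch_slope x i * (y - x) * 0"
    using c by (intro tendsto_intros LIMSEQ_realpow_zero) auto
  ultimately show ?thesis by simp
qed

lemma periodic_point_attracts_right_of_integer:
  assumes "x \<ge> 1" "k \<ge> 1" and cycle: "(U ^^ k) x = x"
  obtains j and n :: nat and \<rho> :: real where "j < k" "n \<ge> 1" "\<rho> > 0"
    "\<And>z. real n < z \<Longrightarrow> z < real n + \<rho> \<Longrightarrow> (\<lambda>m. (U ^^ (m * k)) z) \<longlonglongrightarrow> (U ^^ j) x"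
proof -
  obtain j \<delta> \<epsilon> where "j < k" "\<delta> \<ge> 0" "\<epsilon> > 0"
    and frac_j: "frac ((U ^^ j) x) = branch_slope x j * \<delta>"
    and branch: "\<And>y. x - \<delta> \<le> y \<Longrightarrow> y < x + \<epsilon> \<Longrightarrow> same_branch k y x"
    using branch_interval[OF \<open>k \<ge> 1\<close>] by blast
  define I where "I = {x - \<delta> ..< x + \<epsilon>}"
  define s where "s = branch_slope x j"
  define n where "n = nat \<lfloor>(U ^^ j) x\<rfloor>"
  have "s > 0" unfolding s_def by (rule branch_slope_pos)
  have slope: "branch_slope x k < 1" using periodic_branch_slope_lt_1 assms by simp
  have "x \<in> I" using \<open>\<delta> \<ge> 0\<close> \<open>\<epsilon> > 0\<close> by (simp add: I_def)
  have branch_I: "same_branch i v x" if "v \<in> I" "i \<le> k" for v i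
    using same_branch_le[OF branch] that by (auto simp: I_def)
  have "n \<ge> 1" using funpow_U_ge_1[OF \<open>x \<ge> 1\<close>, of j] unfolding n_def by linarith
  have n_eq: "real n = (U ^^ j) x - s * \<delta>"
    using frac_j \<open>n \<ge> 1\<close> unfolding n_def s_def frac_def by simp
  have "(\<lambda>m. (U ^^ (m * k)) z) \<longlonglongrightarrow> (U ^^ j) x"
    if z: "real n < z" "z < real n + s * (\<delta> + \<epsilon>)" for z
  proof -
    define y where "y = x - \<delta> + (z - real n) / s"
    have "y \<in> I" using z \<open>s > 0\<close> by (auto simp: I_def y_def field_simps)
    have "(U ^^ j) y = (U ^^ j) x + s * (y - x)"
      using funpow_U_branch_diff branch_I[OF \<open>y \<in> I\<close>] \<open>j < k\<close> by (simp add: s_def)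
    then have "z = (U ^^ j) y" using \<open>s > 0\<close> n_eq by (simp add: y_def field_simps)
    have "(U ^^ (m * k)) z = (U ^^ j) ((U ^^ (m * k)) y)" for m
      using \<open>z = (U ^^ j) y\<close> by (metis add.commute comp_apply funpow_add)
    moreover have "(\<lambda>m. (U ^^ j) ((U ^^ (m * k)) y)) \<longlonglongrightarrow> (U ^^ j) x"
      using funpow_period_on_branch_tendsto[of I x y k j] \<open>x \<in> I\<close> \<open>y \<in> I\<close> branch_I cycle slope \<open>j < k\<close>
      by (simp add: I_def)
    ultimately show ?thesis by simp
  qed
  moreover have "s * (\<delta> + \<epsilon>) > 0" using \<open>s > 0\<close> \<open>\<delta> \<ge> 0\<close> \<open>\<epsilon> > 0\<close> by simp
  ultimately show thesis using that \<open>j < k\<close> \<open>n \<ge> 1\<close> by blast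
qed

theorem mainTheorem5:
  assumes hyp: "\<forall>n::nat. n \<ge> 1 \<longrightarrow> (\<forall>\<rho>::real. \<rho> > 0 \<longrightarrow>
                  (\<exists>z. real n < z \<and> z < real n + \<rho> \<and> z \<in> NU_N1 \<and> traj_to_12 z))"
  shows "\<forall>x::real. \<forall>k::nat. x \<ge> 1 \<and> k \<ge> 1 \<and> (U ^^ k) x = x \<longrightarrow> x \<in> {1, 2}"
proof (intro allI impI)
  fix x :: real and k :: nat
  assume "x \<ge> 1 \<and> k \<ge> 1 \<and> (U ^^ k) x = x"
  then have "x \<ge> 1" "k \<ge> 1" and cycle: "(U ^^ k) x = x" by auto
  obtain j n \<rho> where "j < k" "n \<ge> 1" "\<rho> > 0"
    and attract: "\<And>z. real n < z \<Longrightarrow> z < real n + \<rho> \<Longrightarrow> (\<lambda>m. (U ^^ (m * k)) z) \<longlonglongrightarrow> (U ^^ j) x"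
    using periodic_point_attracts_right_of_integer[OF \<open>x \<ge> 1\<close> \<open>k \<ge> 1\<close> cycle] by blast
  then obtain z where "real n < z" "z < real n + \<rho>" "traj_to_12 z" using hyp by blast
  then obtain a b where even_lim: "(\<lambda>m. (U ^^ (2 * m)) z) \<longlonglongrightarrow> a" and "{a, b} = {1, 2}"
    and period_lim: "(\<lambda>m. (U ^^ (m * k)) z) \<longlonglongrightarrow> (U ^^ j) x"
    using attract unfolding traj_to_12_def by blast
  have "strict_mono (\<lambda>m. m * k)" "strict_mono (\<lambda>m. 2 * m :: nat)"
    using \<open>k \<ge> 1\<close> by (auto simp: strict_mono_def)
  have "(\<lambda>m. (U ^^ (2 * m * k)) z) \<longlonglongrightarrow> a"
    using LIMSEQ_subseq_LIMSEQ[OF even_lim \<open>strict_mono (\<lambda>m. m * k)\<close>] by (simp add: o_def mult.assoc)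
  moreover have "(\<lambda>m. (U ^^ (2 * m * k)) z) \<longlonglongrightarrow> (U ^^ j) x"
    using LIMSEQ_subseq_LIMSEQ[OF period_lim \<open>strict_mono (\<lambda>m. 2 * m)\<close>] by (simp add: o_def)
  ultimately have "(U ^^ j) x = a" by (rule LIMSEQ_unique[symmetric])
  then have "(U ^^ j) x \<in> {1, 2}" using \<open>{a, b} = {1, 2}\<close> by (metis insertI1)
  moreover have "x = (U ^^ (k - j)) ((U ^^ j) x)"
    using cycle \<open>j < k\<close> by (metis funpow_add comp_apply le_add_diff_inverse2 less_imp_le)
  ultimately show "x \<in> {1, 2}" by (metis funpow_U_12)
qed

end
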